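(* Let $\hat\lambda\in\mathbb{R}$ and $\lambda\in\mathbb{R}\cup\{+\infty\}$ satisfy $0\le\hat\lambda\le1$, $\tfrac12<\lambda\le+\infty$ and $\hat\lambda^2/(1-\hat\lambda)\le\lambda$. Then there exist $q_0\ge0$ and a $3$-system $\mathbf{P}=(P_1,P_2,P_3)$ on $[q_0,+\infty)$ such that $\lim_{q\to\infty}P_1(q)=+\infty$, $\overline{\varphi}(P_3)=\lambda/(1+\lambda)$ (interpreted as $1$ when $\lambda=+\infty$) and $\kappa(P_3)=\hat\lambda/(1+\hat\lambda)$.
   Context: A $3$-system on $[q_0,+\infty)$ is a continuous piecewise linear map $\mathbf{P}=(P_1,P_2,P_3):[q_0,+\infty)\to\mathbb{R}^3$ such that: (1) for each $q\ge q_0$, $0\le P_1(q)\le P_2(q)\le P_3(q)$ and $P_1(q)+P_2(q)+P_3(q)=q$; (2) on each non-empty open subinterval where $\mathbf{P}$ is differentiable, there is $r\in\{1,2,3\}$ such that $P_r$ has slope $1$ and the other components are constant; (3) if $q>q_0$ is a point where $\mathbf{P}$ is not differentiable and $P_r$ has slope $1$ just to the left of $q$ and $P_s$ has slope $1$ just to the right, with $r<s$, then $P_r(q)=P_{r+1}(q)=\cdots=P_s(q)$. For an unbounded continuous piecewise linear $P$ with slopes $0,1$ changing from slope $1$ to $0$ infinitely often: $(q_i)$ is the increasing sequence of abscissas where the slope changes from $1$ to $0$; $\overline{\varphi}(P)=\limsup_{q\to\infty}P(q)/q$; for $\alpha<\overline\varphi(P)$, $(q_{i,\alpha})_i$ is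 the increasing subsequence of the $q_k$ with $P(q_k)/q_k\ge\alpha$, $r_{i,\alpha}=q_{i+1,\alpha}-P(q_{i+1,\alpha})+P(q_{i,\alpha})$, $\kappa_\alpha(P)=\liminf_i P(q_{i,\alpha})/r_{i,\alpha}$, and $\kappa(P)=\lim_{\alpha\to\overline\varphi(P)^-}\kappa_\alpha(P)$. *)

theory Defs
  imports Complex_Main "HOL-Library.Extended_Real" "HOL-Library.Liminf_Limsup"
begin

definition sys_comp :: "(real \<Rightarrow> real) \<Rightarrow> (real \<Rightarrow> real) \<Rightarrow> (real \<Rightarrow> real) \<Rightarrow> nat \<Rightarrow> real \<Rightarrow> real" where
  "sys_comp P1 P2 P3 j = (if j = 1 then P1 else if j = 2 then P2 else P3)"

text \<open>A 3-system on [q0, +infinity).  Continuous piecewise linear is encoded by a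
  subdivision q0 = t 0 < t 1 < ... tending to infinity such that on each closed piece
  [t k, t (k+1)] the component r k has slope 1 and the others are constant
  (consecutive pieces agree at common endpoints, so the map is continuous).
  Condition (3) is imposed at each subdivision point where the moving component changes.\<close>
definition three_system :: "real \<Rightarrow> (real \<Rightarrow> real) \<Rightarrow> (real \<Rightarrow> real) \<Rightarrow> (real \<Rightarrow> real) \<Rightarrow> bool" where
  "three_system q0 P1 P2 P3 \<longleftrightarrow>
     (\<forall>q\<ge>q0. 0 \<le> P1 q \<and> P1 q \<le> P2 q \<and> P2 q \<le> P3 q \<and> P1 q + P2 q + P3 q = q) \<and>
     (\<exists>(t::nat \<Rightarrow> real) (r::nat \<Rightarrow> nat).
        t 0 = q0 \<and> strict_mono t \<and> filterlim t at_top sequentially \<and>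
        (\<forall>k. r k \<in> {1,2,3} \<and>
           (\<forall>q. t k \<le> q \<and> q \<le> t (Suc k) \<longrightarrow>
              (\<forall>j\<in>{1,2,3}. sys_comp P1 P2 P3 j q =
                 sys_comp P1 P2 P3 j (t k) + (if j = r k then q - t k else 0)))) \<and>
        (\<forall>k. r k < r (Suc k) \<longrightarrow>
           (\<forall>j. r k \<le> j \<and> j \<le> r (Suc k) \<longrightarrow>
              sys_comp P1 P2 P3 j (t (Suc k)) = sys_comp P1 P2 P3 (r k) (t (Suc k)))))"

definition switch_pts :: "real \<Rightarrow> (real \<Rightarrow> real) \<Rightarrow> real set" where
  "switch_pts q0 P = {q. q > q0 \<and>
      (\<exists>e>0. \<forall>x. q - e \<le> x \<and> x \<le> q \<longrightarrow> P x = P q - (q - x)) \<and>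
      (\<exists>e>0. \<forall>x. q \<le> x \<and> x \<le> q + e \<longrightarrow> P x = P q)}"

text \<open>Increasing enumeration of a (locally finite, bounded below) set of reals.\<close>
primrec enum_real :: "real set \<Rightarrow> nat \<Rightarrow> real" where
  "enum_real S 0 = Inf S"
| "enum_real S (Suc n) = Inf {x \<in> S. x > enum_real S n}"

definition phibar :: "(real \<Rightarrow> real) \<Rightarrow> ereal" where
  "phibar P = Limsup at_top (\<lambda>q. ereal (P q / q))"

definition q_alpha :: "real \<Rightarrow> (real \<Rightarrow> real) \<Rightarrow> real \<Rightarrow> nat \<Rightarrow> real" where
  "q_alpha q0 P \<alpha> = enum_real {q \<in> switch_pts q0 P. P q / q \<ge> \<alpha>}"

definition r_alpha :: "real \<Rightarrow> (real \<Rightarrow> real) \<Rightarrow> real \<Rightarrow> nat \<Rightarrow> real" where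
  "r_alpha q0 P \<alpha> i = q_alpha q0 P \<alpha> (Suc i) - P (q_alpha q0 P \<alpha> (Suc i)) + P (q_alpha q0 P \<alpha> i)"

definition kappa_alpha :: "real \<Rightarrow> (real \<Rightarrow> real) \<Rightarrow> real \<Rightarrow> ereal" where
  "kappa_alpha q0 P \<alpha> = Liminf sequentially (\<lambda>i. ereal (P (q_alpha q0 P \<alpha> i) / r_alpha q0 P \<alpha> i))"

definition has_kappa :: "real \<Rightarrow> (real \<Rightarrow> real) \<Rightarrow> ereal \<Rightarrow> bool" where
  "has_kappa q0 P k \<longleftrightarrow> ((\<lambda>\<alpha>. kappa_alpha q0 P \<alpha>) \<longlongrightarrow> k) (at_left (real_of_ereal (phibar P)))"

end

theory Submission
  imports Defs
begin

text \<open>A 3-system is obtained by interpolating a sequence of states in which one component moves at a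
  time. We use blocks of four moves taking (A n, B n, C n) to (A (n+1), B (n+1), C (n+1)); then P3
  switches from slope 1 to slope 0 exactly at the block boundaries q = A n + B n + C n, where
  P3 q / q = C n / (A n + B n + C n). With C (n+1) = g n * C n, A (n+1) = \<tau> n * C n and
  B (n+1) = C n this block ratio is g n / (1 + \<tau> n + g n). In record blocks we take
  g n = lv n * (1 + \<tau> n), so that the ratio lv n / (1 + lv n) increases to l / (1 + l), and in the
  other blocks a fixed factor \<gamma> with smaller ratio. For \<alpha> close to phibar the points q_{i,\<alpha>} are then
  exactly the record boundaries, and the quotient defining kappa is 1 / (1 + (1 + \<tau>) * \<gamma> ^ gap)
  between consecutive records. Constant gaps give kappa = lh / (1 + lh) for 0 < lh < 1/2, growing gaps
  give kappa = 0, and making every block a record with \<tau> n \<rightarrow> (1 - lh) / lh covers lh \<ge> 1/2. In the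
  last case the requirement B (n+1) < A (n+2), i.e. 1 < \<tau> (n+1) * lv n * (1 + \<tau> n), is where the
  hypothesis lh^2 / (1 - lh) \<le> l enters.\<close>

lemma Limsup_mono_filter: "F \<le> G \<Longrightarrow> Limsup F f \<le> Limsup G f"
  unfolding Limsup_def by (rule INF_mono) (auto simp: le_filter_def)

lemma realpow_at_top:
  fixes c :: real
  assumes "1 < c"
  shows "filterlim (\<lambda>n. c ^ n) at_top sequentially"
proof -
  have "filterlim (\<lambda>n. norm (c ^ n)) at_top sequentially"
    using filterlim_at_infinity_imp_norm_at_top[OF filterlim_realpow_sequentially_gt1[of c]] assms by simp
  then show ?thesis using assms by (simp add: abs_of_pos)
qed

lemma enum_real_strict_mono_tail:
  fixes s :: "nat \<Rightarrow> real"
  assumes "strict_mono s"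
  shows "enum_real {s k | k. K \<le> k} i = s (K + i)"
proof (induction i)
  case 0
  have "Inf {s k | k. K \<le> k} = s K"
    by (rule cInf_eq_minimum) (auto simp: strict_mono_less_eq[OF assms])
  then show ?case by simp
next
  case (Suc i)
  have "Inf {x \<in> {s k | k. K \<le> k}. s (K + i) < x} = s (K + Suc i)"
  proof (rule cInf_eq_minimum)
    show "s (K + Suc i) \<in> {x \<in> {s k | k. K \<le> k}. s (K + i) < x}"
      using strict_monoD[OF assms, of "K + i" "K + Suc i"] by auto
  next
    fix x assume "x \<in> {x \<in> {s k | k. K \<le> k}. s (K + i) < x}"
    then obtain k where "x = s k" "s (K + i) < s k" by auto
    then show "s (K + Suc i) \<le> x" using strict_mono_less[OF assms] strict_mono_less_eq[OF assms]
      by (metis Suc_leI add_Suc_right)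
  qed
  then show ?case using Suc by simp
qed

lemma one_less_of_one_less_mult:
  fixes t x :: real
  assumes "0 \<le> t" "t \<le> 1" "1 < t * x"
  shows "1 < x"
proof (rule ccontr)
  assume "\<not> 1 < x"
  then have "t * x \<le> t * 1" using assms(1) by (intro mult_left_mono) auto
  then show False using assms by simp
qed

lemma div_one_plus_mono:
  fixes x y :: real
  assumes "0 \<le> x" "x \<le> y"
  shows "x / (1 + x) \<le> y / (1 + y)"
  using assms by (simp add: divide_simps algebra_simps)

lemma div_one_plus_scaled:
  fixes x t :: real
  assumes "0 < 1 + t"
  shows "x * (1 + t) / (1 + t + x * (1 + t)) = x / (1 + x)"
proof -
  have "1 + t + x * (1 + t) = (1 + x) * (1 + t)" by (simp add: algebra_simps)
  then show ?thesis using assms by simp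
qed

lemma div_one_plus_tendsto_1:
  fixes f :: "nat \<Rightarrow> real"
  assumes "filterlim f at_top sequentially"
  shows "(\<lambda>k. f k / (1 + f k)) \<longlonglongrightarrow> 1"
proof -
  have "filterlim (\<lambda>k. 1 + f k) at_top sequentially"
    by (rule filterlim_at_top_mono[OF assms]) simp
  then have "(\<lambda>k. 1 - inverse (1 + f k)) \<longlonglongrightarrow> 1 - 0"
    by (intro tendsto_diff tendsto_const tendsto_inverse_0_at_top)
  moreover have "eventually (\<lambda>k. 1 - inverse (1 + f k) = f k / (1 + f k)) sequentially"
  proof -
    have "eventually (\<lambda>k. 0 < f k) sequentially"
      using assms by (simp add: filterlim_at_top_dense)
    then show ?thesis by (rule eventually_mono) (simp add: field_simps)
  qed
  ultimately show ?thesis by (simp add: tendsto_cong)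
qed

lemma inverse_geometric_gap_tendsto_0:
  fixes \<gamma> t :: real and d :: "nat \<Rightarrow> nat"
  assumes "1 < \<gamma>" "0 \<le> t" "filterlim d at_top sequentially"
  shows "(\<lambda>k. 1 / (1 + (1 + t) * \<gamma> ^ d k)) \<longlonglongrightarrow> 0"
proof -
  have "filterlim (\<lambda>k. \<gamma> ^ d k) at_top sequentially"
    using filterlim_compose[OF realpow_at_top[OF assms(1)] assms(3)] .
  moreover have "\<gamma> ^ d k \<le> 1 + (1 + t) * \<gamma> ^ d k" for k
    using assms(1,2) by (simp add: algebra_simps add_increasing)
  ultimately have "filterlim (\<lambda>k. 1 + (1 + t) * \<gamma> ^ d k) at_top sequentially"
    by (auto intro: filterlim_at_top_mono)
  then show ?thesis
    using tendsto_inverse_0_at_top by (simp add: divide_inverse)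
qed

lemma prod_between_strict_mono:
  fixes M :: "nat \<Rightarrow> nat" and g :: "nat \<Rightarrow> real"
  assumes "strict_mono M" "\<And>i. i \<notin> range M \<Longrightarrow> g i = c"
  shows "(\<Prod>i\<in>{Suc (M k)..<M (Suc k)}. g i) = c ^ (M (Suc k) - Suc (M k))"
proof -
  have "i \<notin> range M" if "M k < i" "i < M (Suc k)" for i
    using that strict_mono_less[OF assms(1)] by (metis not_less_eq rangeE)
  then have "(\<Prod>i\<in>{Suc (M k)..<M (Suc k)}. g i) = (\<Prod>i\<in>{Suc (M k)..<M (Suc k)}. c)"
    using assms(2) by (intro prod.cong) auto
  then show ?thesis by simp
qed

lemma tendsto_plus_const_over_n:
  fixes t c :: real
  shows "(\<lambda>n. t + c / real (n + 2)) \<longlonglongrightarrow> t"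
  using tendsto_add[OF tendsto_const LIMSEQ_ignore_initial_segment[OF lim_const_over_n[of c], of 2]]
  by simp

lemma const_over_n_bounds:
  fixes c :: real
  assumes "0 < c"
  shows "0 < c / real (n + 2)" "c / real (n + 2) < c"
  using assms by (simp_all add: divide_simps)

section \<open>Interpolating a sequence of states\<close>

text \<open>The interpolated system takes the value st k at the abscissa time k = st k 1 + st k 2 + st k 3,
  only component mover k moves on [time k, time (Suc k)], and merge is condition (3) of a 3-system.\<close>

locale step_system =
  fixes st :: "nat \<Rightarrow> nat \<Rightarrow> real" and mover :: "nat \<Rightarrow> nat"
  assumes mover_range: "mover k \<in> {1,2,3}"
    and frozen: "j \<in> {1,2,3} \<Longrightarrow> j \<noteq> mover k \<Longrightarrow> st (Suc k) j = st k j"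
    and moves: "st k (mover k) < st (Suc k) (mover k)"
    and ordered: "0 \<le> st k 1 \<and> st k 1 \<le> st k 2 \<and> st k 2 \<le> st k 3"
    and top_at_top: "filterlim (\<lambda>k. st k 3) at_top sequentially"
    and merge: "mover k < mover (Suc k) \<Longrightarrow> mover k \<le> j \<Longrightarrow> j \<le> mover (Suc k) \<Longrightarrow>
                st (Suc k) j = st (Suc k) (mover k)"
begin

definition time :: "nat \<Rightarrow> real" where
  "time k = st k 1 + st k 2 + st k 3"

definition segment :: "real \<Rightarrow> nat" where
  "segment q = (LEAST k. q < time (Suc k))"

definition interp :: "nat \<Rightarrow> real \<Rightarrow> real" where
  "interp j q = st (segment q) j + (if j = mover (segment q) then q - time (segment q) else 0)"

lemma st_Suc:
  assumes "j \<in> {1,2,3}"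
  shows "st (Suc k) j = st k j + (if j = mover k then time (Suc k) - time k else 0)"
proof -
  have "mover k = 1 \<or> mover k = 2 \<or> mover k = 3" using mover_range[of k] by auto
  then show ?thesis
    using assms frozen[of _ k] unfolding time_def by (elim disjE) auto
qed

lemma time_less_Suc: "time k < time (Suc k)"
  using st_Suc[OF mover_range, of k] moves[of k] by simp

lemma strict_mono_time: "strict_mono time"
  using time_less_Suc by (simp add: strict_mono_Suc_iff)

lemma time_at_top: "filterlim time at_top sequentially"
proof (rule filterlim_at_top_mono[OF top_at_top])
  have "st k 3 \<le> time k" for k
    using ordered[of k] unfolding time_def by linarith
  then show "eventually (\<lambda>k. st k 3 \<le> time k) sequentially" by simp
qed

lemma segment_eq:
  assumes "time k \<le> q" "q < time (Suc k)"
  shows "segment q = k"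
  unfolding segment_def
proof (rule Least_equality)
  fix m assume "q < time (Suc m)"
  with assms(1) have "time k < time (Suc m)" by linarith
  then show "k \<le> m" using strict_mono_less[OF strict_mono_time] by simp
qed fact

lemma segment_bounds:
  assumes "time 0 \<le> q"
  shows "time (segment q) \<le> q" "q < time (Suc (segment q))"
proof -
  obtain m where "q < time m"
    using time_at_top by (auto simp: filterlim_at_top_dense eventually_sequentially)
  then have "q < time (Suc m)" using time_less_Suc[of m] by linarith
  then show "q < time (Suc (segment q))"
    unfolding segment_def by (rule LeastI)
  show "time (segment q) \<le> q"
  proof (cases "segment q")
    case (Suc m)
    have "\<not> q < time (Suc m)"
      using Suc Least_le[of "\<lambda>k. q < time (Suc k)" m] unfolding segment_def by auto
    then show ?thesis using Suc by simp
  qed (use assms in simp)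
qed

lemma le_segment:
  assumes "time 0 \<le> q" "time k \<le> q"
  shows "k \<le> segment q"
proof (rule ccontr)
  assume "\<not> k \<le> segment q"
  then have "time (Suc (segment q)) \<le> time k"
    using strict_mono_less_eq[OF strict_mono_time] by simp
  then show False using segment_bounds(2)[OF assms(1)] assms(2) by simp
qed

lemma interp_segment:
  assumes "time k \<le> q" "q \<le> time (Suc k)" "j \<in> {1,2,3}"
  shows "interp j q = st k j + (if j = mover k then q - time k else 0)"
proof (cases "q < time (Suc k)")
  case True
  then show ?thesis using segment_eq[OF assms(1)] by (simp add: interp_def)
next
  case False
  then have "q = time (Suc k)" using assms(2) by simp
  moreover have "segment q = Suc k"
    using calculation time_less_Suc[of "Suc k"] by (intro segment_eq) auto
  ultimately show ?thesis using st_Suc[OF assms(3), of k] by (simp add: interp_def)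
qed

lemma interp_time: "j \<in> {1,2,3} \<Longrightarrow> interp j (time k) = st k j"
  using interp_segment[of k "time k" j] time_less_Suc[of k] by simp

lemma interp_bounds:
  assumes "time k \<le> q" "q \<le> time (Suc k)" "j \<in> {1,2,3}"
  shows "st k j \<le> interp j q" "interp j q \<le> st (Suc k) j"
    and "j \<noteq> mover k \<Longrightarrow> interp j q = st k j"
  using interp_segment[OF assms] st_Suc[OF assms(3), of k] assms(1,2) by auto

lemma interp_ordered:
  assumes "time 0 \<le> q"
  shows "0 \<le> interp 1 q \<and> interp 1 q \<le> interp 2 q \<and> interp 2 q \<le> interp 3 q \<and>
         interp 1 q + interp 2 q + interp 3 q = q"
proof -
  define k where "k = segment q"
  have q: "time k \<le> q" "q \<le> time (Suc k)"
    using segment_bounds[OF assms] by (auto simp: k_def)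
  note bounds = interp_bounds[OF q]
  have sum: "interp 1 q + interp 2 q + interp 3 q = q"
    using interp_segment[OF q] mover_range[of k] by (auto simp: time_def)
  have indices: "(1::nat) \<in> {1,2,3}" "(2::nat) \<in> {1,2,3}" "(3::nat) \<in> {1,2,3}" by simp_all
  note facts = sum bounds(1,2)[OF indices(1)] bounds(1,2)[OF indices(2)] bounds(1,2)[OF indices(3)]
    ordered[of k] ordered[of "Suc k"]
  consider "mover k = 1" | "mover k = 2" | "mover k = 3"
    using mover_range[of k] by auto
  then show ?thesis
  proof cases
    case 1
    then have "interp 2 q = st k 2" "st (Suc k) 2 = st k 2"
      using bounds(3)[of 2] frozen[of 2 k] by auto
    then show ?thesis using facts by linarith
  next
    case 2
    then have "interp 1 q = st k 1" "interp 3 q = st k 3" "st (Suc k) 3 = st k 3"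
      using bounds(3)[of 1] bounds(3)[of 3] frozen[of 3 k] by auto
    then show ?thesis using facts by linarith
  next
    case 3
    then have "interp 2 q = st k 2" "st (Suc k) 2 = st k 2"
      using bounds(3)[of 2] frozen[of 2 k] by auto
    then show ?thesis using facts by linarith
  qed
qed

theorem three_system_interp: "three_system (time 0) (interp 1) (interp 2) (interp 3)"
proof -
  have comp: "sys_comp (interp 1) (interp 2) (interp 3) j = interp j" if "j \<in> {1,2,3}" for j
    using that unfolding sys_comp_def by auto
  have merge_interp: "sys_comp (interp 1) (interp 2) (interp 3) j (time (Suc k))
      = sys_comp (interp 1) (interp 2) (interp 3) (mover k) (time (Suc k))"
    if "mover k < mover (Suc k)" "mover k \<le> j" "j \<le> mover (Suc k)" for k j
  proof -
    have "j \<in> {1,2,3}" using that mover_range[of k] mover_range[of "Suc k"] by auto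
    then show ?thesis
      using merge[OF that] comp mover_range[of k] interp_time by simp
  qed
  have segments: "\<forall>k. mover k \<in> {1,2,3} \<and> (\<forall>q. time k \<le> q \<and> q \<le> time (Suc k) \<longrightarrow>
      (\<forall>j\<in>{1,2,3}. sys_comp (interp 1) (interp 2) (interp 3) j q =
         sys_comp (interp 1) (interp 2) (interp 3) j (time k) + (if j = mover k then q - time k else 0)))"
  proof (intro allI conjI impI ballI)
    fix k q j assume "time k \<le> q \<and> q \<le> time (Suc k)" and j: "j \<in> {1::nat,2,3}"
    then show "sys_comp (interp 1) (interp 2) (interp 3) j q =
        sys_comp (interp 1) (interp 2) (interp 3) j (time k) + (if j = mover k then q - time k else 0)"
      unfolding comp[OF j] interp_time[OF j] using interp_segment by blast
  qed (rule mover_range)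
  show ?thesis
    unfolding three_system_def
    using interp_ordered strict_mono_time time_at_top segments merge_interp
    by (intro conjI exI[of _ time] exI[of _ mover]) blast+
qed

lemma st_mono:
  assumes "j \<in> {1,2,3}" "k \<le> m"
  shows "st k j \<le> st m j"
proof -
  have "incseq (\<lambda>k. st k j)"
    using st_Suc[OF assms(1)] time_less_Suc by (intro incseq_SucI) (simp add: less_imp_le)
  then show ?thesis using incseqD assms(2) by blast
qed

lemma interp_at_top:
  assumes "j \<in> {1,2,3}" "filterlim (\<lambda>k. st k j) at_top sequentially"
  shows "filterlim (interp j) at_top at_top"
  unfolding filterlim_at_top
proof
  fix Z :: real
  obtain k0 where k0: "Z \<le> st k0 j"
    using assms(2) by (auto simp: filterlim_at_top eventually_sequentially)
  show "eventually (\<lambda>q. Z \<le> interp j q) at_top"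
    unfolding eventually_at_top_linorder
  proof (intro exI allI impI)
    fix q assume q: "time k0 \<le> q"
    have q0: "time 0 \<le> q"
      using q strict_mono_less_eq[OF strict_mono_time, of 0 k0] by simp
    have "st k0 j \<le> st (segment q) j"
      using st_mono[OF assms(1) le_segment[OF q0 q]] .
    also have "\<dots> \<le> interp j q"
      using interp_bounds(1) segment_bounds[OF q0] assms(1) by (simp add: less_imp_le)
    finally show "Z \<le> interp j q" using k0 by simp
  qed
qed

lemma interp_diff:
  assumes "time k \<le> x" "x \<le> time (Suc k)" "time k \<le> y" "y \<le> time (Suc k)" "j \<in> {1,2,3}"
  shows "interp j x - interp j y = (if j = mover k then x - y else 0)"
  using interp_segment[OF assms(1,2,5)] interp_segment[OF assms(3,4,5)] by simp

lemma rising_left_mover: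
  assumes "time k < q" "q \<le> time (Suc k)" "j \<in> {1,2,3}" "e > 0"
    and rise: "\<forall>x. q - e \<le> x \<and> x \<le> q \<longrightarrow> interp j x = interp j q - (q - x)"
  shows "mover k = j"
proof (rule ccontr)
  assume not_mover: "mover k \<noteq> j"
  define y where "y = max (q - e) (time k)"
  have y: "y < q" "q - e \<le> y" "time k \<le> y" using assms(1,4) by (auto simp: y_def)
  then have "interp j y = interp j q - (q - y)" using rise[rule_format, of y] by linarith
  moreover have "interp j q - interp j y = 0"
    using interp_diff[of k q y j] y assms(1-3) not_mover by simp
  ultimately show False using y(1) by simp
qed

lemma flat_right_not_mover:
  assumes "time k \<le> q" "q < time (Suc k)" "j \<in> {1,2,3}" "e > 0"
    and flat: "\<forall>x. q \<le> x \<and> x \<le> q + e \<longrightarrow> interp j x = interp j q"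
  shows "mover k \<noteq> j"
proof
  assume mover: "mover k = j"
  define x where "x = min (q + e) (time (Suc k))"
  have x: "q < x" "x \<le> q + e" "x \<le> time (Suc k)" using assms(2,4) by (auto simp: x_def)
  then have "interp j x = interp j q" using flat[rule_format, of x] by linarith
  moreover have "interp j x - interp j q = x - q"
    using interp_diff[of k x q j] x assms(1-3) mover by simp
  ultimately show False using x(1) by simp
qed

theorem switch_pts_interp:
  assumes j: "j \<in> {1,2,3}"
  shows "switch_pts (time 0) (interp j) = {time (Suc k) | k. mover k = j \<and> mover (Suc k) \<noteq> j}"
proof (intro set_eqI iffI)
  fix q assume "q \<in> switch_pts (time 0) (interp j)"
  then obtain e1 e2 where q0: "time 0 < q" and e: "e1 > 0" "e2 > 0"
    and rise: "\<forall>x. q - e1 \<le> x \<and> x \<le> q \<longrightarrow> interp j x = interp j q - (q - x)"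
    and flat: "\<forall>x. q \<le> x \<and> x \<le> q + e2 \<longrightarrow> interp j x = interp j q"
    unfolding switch_pts_def mem_Collect_eq by (elim conjE exE) blast
  define k where "k = segment q"
  have k: "time k \<le> q" "q < time (Suc k)"
    using segment_bounds[OF less_imp_le[OF q0]] unfolding k_def by auto
  have not_mover: "mover k \<noteq> j" by (rule flat_right_not_mover[OF k j e(2) flat])
  have q: "q = time k"
  proof (rule ccontr)
    assume "q \<noteq> time k"
    then have "time k < q" using k(1) by simp
    then have "mover k = j" by (rule rising_left_mover[OF _ less_imp_le[OF k(2)] j e(1) rise])
    with not_mover show False by simp
  qed
  then obtain m where m: "k = Suc m" using q0 by (cases k) auto
  have "mover m = j"
    by (rule rising_left_mover[OF _ _ j e(1) rise]) (use time_less_Suc[of m] q m in simp_all)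
  then show "q \<in> {time (Suc k) | k. mover k = j \<and> mover (Suc k) \<noteq> j}"
    using q m not_mover by blast
next
  fix q assume "q \<in> {time (Suc k) | k. mover k = j \<and> mover (Suc k) \<noteq> j}"
  then obtain k where q: "q = time (Suc k)" "mover k = j" "mover (Suc k) \<noteq> j" by blast
  have rise: "interp j x = interp j q - (q - x)" if "q - (time (Suc k) - time k) \<le> x" "x \<le> q" for x
    using interp_diff[of k x q j] q j that time_less_Suc[of k] by simp
  have flat: "interp j x = interp j q" if "q \<le> x" "x \<le> q + (time (Suc (Suc k)) - q)" for x
    using interp_diff[of "Suc k" x q j] q j that time_less_Suc[of k] by simp
  have "\<exists>e>0. \<forall>x. q - e \<le> x \<and> x \<le> q \<longrightarrow> interp j x = interp j q - (q - x)"
  proof (intro exI[of _ "time (Suc k) - time k"] conjI allI impI)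
    show "0 < time (Suc k) - time k" using time_less_Suc[of k] by simp
  qed (use rise in blast)
  moreover have "\<exists>e>0. \<forall>x. q \<le> x \<and> x \<le> q + e \<longrightarrow> interp j x = interp j q"
  proof (intro exI[of _ "time (Suc (Suc k)) - q"] conjI allI impI)
    show "0 < time (Suc (Suc k)) - q" using time_less_Suc[of "Suc k"] q(1) by simp
  qed (use flat in blast)
  moreover have "time 0 < q" using q strict_mono_less[OF strict_mono_time] by simp
  ultimately show "q \<in> switch_pts (time 0) (interp j)"
    unfolding switch_pts_def by blast
qed

lemma st_nonneg: "j \<in> {1,2,3} \<Longrightarrow> 0 \<le> st k j"
  using ordered[of k] by auto

lemma st_le_time: "j \<in> {1,2,3} \<Longrightarrow> st k j \<le> time k"
  using ordered[of k] unfolding time_def by auto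

lemma interp_ratio_le:
  assumes "0 < time k" "time k \<le> q" "q \<le> time (Suc k)" and j: "j \<in> {1,2,3}"
  shows "interp j q / q \<le> max (st k j / time k) (st (Suc k) j / time (Suc k))"
proof (cases "j = mover k")
  case False
  then have "interp j q = st k j" using interp_bounds(3)[OF assms(2,3) j] by simp
  moreover have "st k j / q \<le> st k j / time k"
    using assms(1,2) st_nonneg[OF j] by (intro divide_left_mono) auto
  ultimately show ?thesis by simp
next
  case True
  define c Q where "c = st (Suc k) j" and "Q = time (Suc k)"
  have P: "interp j q = c - (Q - q)"
    using interp_segment[OF assms(2,3) j] st_Suc[OF j, of k] True by (simp add: c_def Q_def)
  have "(Q - q) * (c - Q) \<le> 0"
    using assms(3) st_le_time[OF j, of "Suc k"] by (intro mult_nonneg_nonpos) (auto simp: c_def Q_def)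
  then have "(c - (Q - q)) * Q \<le> c * q" by (simp add: algebra_simps)
  moreover have "0 < q" "0 < Q" using assms(1-3) by (auto simp: Q_def)
  ultimately have "(c - (Q - q)) / q \<le> c / Q" by (simp add: divide_simps)
  then show ?thesis unfolding P c_def Q_def by simp
qed

end

section \<open>Block systems\<close>

lemma mod4_Suc_cases:
  fixes s :: nat
  obtains "s mod 4 = 0" "Suc s mod 4 = 1" "Suc s div 4 = s div 4"
        | "s mod 4 = 1" "Suc s mod 4 = 2" "Suc s div 4 = s div 4"
        | "s mod 4 = 2" "Suc s mod 4 = 3" "Suc s div 4 = s div 4"
        | "s mod 4 = 3" "Suc s mod 4 = 0" "Suc s div 4 = Suc (s div 4)"
proof -
  have "s mod 4 < 4" by simp
  then consider "s mod 4 = 0" | "s mod 4 = 1" | "s mod 4 = 2" | "s mod 4 = 3" by linarith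
  then show ?thesis by cases (rule that; presburger)+
qed

text \<open>In block n the states at steps 4n, ..., 4n+4 are (A n, B n, C n), (A n, A (n+1), C n),
  (A (n+1), A (n+1), C n), (A (n+1), C n, C n) and (A (n+1), C n, C (n+1)) = (A (n+1), B (n+1), C (n+1)).\<close>

definition block_state :: "(nat \<Rightarrow> real) \<Rightarrow> (nat \<Rightarrow> real) \<Rightarrow> (nat \<Rightarrow> real) \<Rightarrow> nat \<Rightarrow> nat \<Rightarrow> real" where
  "block_state A B C s j =
     (if j = 1 then (if s mod 4 \<le> 1 then A (s div 4) else A (Suc (s div 4)))
      else if j = 2 then (if s mod 4 = 0 then B (s div 4)
                          else if s mod 4 \<le> 2 then A (Suc (s div 4)) else C (s div 4))
      else C (s div 4))"

definition block_mover :: "nat \<Rightarrow> nat" where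
  "block_mover s = (if s mod 4 = 1 then 1 else if s mod 4 = 3 then 3 else 2)"

locale blocks =
  fixes A B C :: "nat \<Rightarrow> real"
  assumes A0_nonneg: "0 \<le> A 0" and A0_le_B0: "A 0 \<le> B 0"
    and B_less_A_Suc: "B n < A (Suc n)" and A_Suc_less_C: "A (Suc n) < C n"
    and B_Suc: "B (Suc n) = C n" and C_less_Suc: "C n < C (Suc n)"
    and C_at_top: "filterlim C at_top sequentially"
begin

lemma block_ordered: "0 \<le> A n \<and> A n \<le> B n \<and> B n \<le> C n"
proof (induction n)
  case 0 then show ?case using A0_nonneg A0_le_B0 B_less_A_Suc[of 0] A_Suc_less_C[of 0] by auto
next
  case (Suc n) then show ?case using B_less_A_Suc[of n] A_Suc_less_C[of n] B_Suc[of n] C_less_Suc[of n] by auto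
qed

sublocale step_system "block_state A B C" block_mover
proof
  fix k :: nat and j :: nat
  have ord: "0 \<le> A (k div 4)" "A (k div 4) \<le> B (k div 4)" "B (k div 4) \<le> C (k div 4)"
    using block_ordered by auto
  note facts = ord B_less_A_Suc[of "k div 4"] A_Suc_less_C[of "k div 4"] B_Suc[of "k div 4"]
    C_less_Suc[of "k div 4"]
  show "block_mover k \<in> {1,2,3}" by (simp add: block_mover_def)
  show "j \<in> {1,2,3} \<Longrightarrow> j \<noteq> block_mover k \<Longrightarrow> block_state A B C (Suc k) j = block_state A B C k j"
    by (cases k rule: mod4_Suc_cases) (auto simp: block_state_def block_mover_def facts)
  show "block_state A B C k (block_mover k) < block_state A B C (Suc k) (block_mover k)"
    by (cases k rule: mod4_Suc_cases) (use facts in \<open>auto simp: block_state_def block_mover_def\<close>)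
  show "0 \<le> block_state A B C k 1 \<and> block_state A B C k 1 \<le> block_state A B C k 2 \<and>
      block_state A B C k 2 \<le> block_state A B C k 3"
    by (cases k rule: mod4_Suc_cases) (use facts in \<open>auto simp: block_state_def\<close>)
  show "block_mover k < block_mover (Suc k) \<Longrightarrow> block_mover k \<le> j \<Longrightarrow> j \<le> block_mover (Suc k) \<Longrightarrow>
      block_state A B C (Suc k) j = block_state A B C (Suc k) (block_mover k)"
    by (cases k rule: mod4_Suc_cases) (auto simp: block_state_def block_mover_def)
next
  show "filterlim (\<lambda>k. block_state A B C k 3) at_top sequentially"
    unfolding block_state_def
    using filterlim_compose[OF C_at_top filterlim_at_top_div_const_nat[of 4]] by simp
qed

definition block_ratio :: "nat \<Rightarrow> real" where
  "block_ratio n = C n / (A n + B n + C n)"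

lemma time_block: "time (4 * n) = A n + B n + C n"
  by (simp add: time_def block_state_def)

lemma time_block_pos: "0 < time (4 * n)"
  using block_ordered[of n] C_less_Suc[of n] A_Suc_less_C[of n] block_ordered[of "Suc n"]
  unfolding time_block by linarith

lemma interp3_time_block: "interp 3 (time (4 * n)) = C n"
  using interp_time[of 3 "4 * n"] by (simp add: block_state_def)

lemma interp3_ratio_block: "interp 3 (time (4 * n)) / time (4 * n) = block_ratio n"
  unfolding interp3_time_block unfolding time_block block_ratio_def ..

lemma block_mover_eq_3: "block_mover k = 3 \<longleftrightarrow> k mod 4 = 3"
  by (simp add: block_mover_def)

lemma switch_pts_interp3: "switch_pts (time 0) (interp 3) = range (\<lambda>n. time (4 * Suc n))"
proof -
  have "{time (Suc k) | k. block_mover k = 3 \<and> block_mover (Suc k) \<noteq> 3} = range (\<lambda>n. time (4 * Suc n))"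
  proof (intro set_eqI iffI)
    fix q assume "q \<in> {time (Suc k) | k. block_mover k = 3 \<and> block_mover (Suc k) \<noteq> 3}"
    then obtain k where "q = time (Suc k)" "k mod 4 = 3" by (auto simp: block_mover_eq_3)
    moreover from this have "Suc k = 4 * Suc (k div 4)" by presburger
    ultimately show "q \<in> range (\<lambda>n. time (4 * Suc n))" by auto
  next
    fix q assume "q \<in> range (\<lambda>n. time (4 * Suc n))"
    then obtain n where "q = time (Suc (4 * n + 3))" by auto
    then show "q \<in> {time (Suc k) | k. block_mover k = 3 \<and> block_mover (Suc k) \<noteq> 3}"
      unfolding block_mover_eq_3 by (intro CollectI exI[of _ "4 * n + 3"]) presburger
  qed
  then show ?thesis using switch_pts_interp[of 3] by simp
qed

lemma state_ratio_le: "block_state A B C s 3 / time s \<le> block_ratio (s div 4)"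
proof -
  have "time (4 * (s div 4)) \<le> time s"
    using strict_mono_less_eq[OF strict_mono_time] by simp
  then show ?thesis
    unfolding block_ratio_def time_block[symmetric]
    using time_block_pos[of "s div 4"] block_ordered[of "s div 4"]
    by (simp add: block_state_def divide_left_mono)
qed

lemma interp3_ratio_le:
  assumes "\<And>n. 1 \<le> n \<Longrightarrow> block_ratio n \<le> \<Phi>" and "time 4 \<le> q"
  shows "interp 3 q / q \<le> \<Phi>"
proof -
  have q0: "time 0 \<le> q" using assms(2) strict_mono_less_eq[OF strict_mono_time, of 0 4] by simp
  define k where "k = segment q"
  have k: "time k \<le> q" "q \<le> time (Suc k)"
    using segment_bounds[OF q0] by (auto simp: k_def less_imp_le)
  have "4 \<le> k" using le_segment[OF q0 assms(2)] by (simp add: k_def)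
  then have "0 < time k" "1 \<le> k div 4" "1 \<le> Suc k div 4"
    using time_block_pos[of 0] strict_mono_less_eq[OF strict_mono_time, of 0 k] by auto
  then have bound: "max (block_state A B C k 3 / time k) (block_state A B C (Suc k) 3 / time (Suc k)) \<le> \<Phi>"
    using state_ratio_le[of k] state_ratio_le[of "Suc k"] assms(1)
    by (intro max.boundedI) (meson order_trans)+
  show ?thesis by (rule order_trans[OF interp_ratio_le[OF \<open>0 < time k\<close> k] bound]) simp
qed

lemma interp1_at_top: "filterlim (interp 1) at_top at_top"
proof (rule interp_at_top)
  show "filterlim (\<lambda>k. block_state A B C k 1) at_top sequentially"
    unfolding filterlim_at_top eventually_sequentially
  proof
    fix Z
    obtain n where n: "Z \<le> C n"
      using C_at_top unfolding filterlim_at_top eventually_sequentially by blast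
    have "Z \<le> block_state A B C k 1" if "4 * Suc (Suc n) \<le> k" for k
    proof -
      have "C n < A (Suc (Suc n))" using B_less_A_Suc[of "Suc n"] B_Suc[of n] by simp
      also have "\<dots> = block_state A B C (4 * Suc (Suc n)) 1" by (simp add: block_state_def)
      also have "\<dots> \<le> block_state A B C k 1" using st_mono[OF _ that] by simp
      finally show ?thesis using n by simp
    qed
    then show "\<exists>k0. \<forall>k\<ge>k0. Z \<le> block_state A B C k 1" by blast
  qed
qed simp

end

section \<open>Ratios at the switch points\<close>

definition realizable :: "real \<Rightarrow> real \<Rightarrow> bool" where
  "realizable \<Phi> \<kappa> \<longleftrightarrow> (\<exists>q0 P1 P2 P3. q0 \<ge> 0 \<and> three_system q0 P1 P2 P3 \<and>
     filterlim P1 at_top at_top \<and> infinite (switch_pts q0 P3) \<and>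
     phibar P3 = ereal \<Phi> \<and> has_kappa q0 P3 (ereal \<kappa>))"

locale block_records = blocks +
  fixes N :: "nat \<Rightarrow> nat" and \<theta> \<Phi> :: real
  assumes strict_mono_N: "strict_mono N" and N0_pos: "0 < N 0"
    and off_record_ratio: "1 \<le> n \<Longrightarrow> n \<notin> range N \<Longrightarrow> block_ratio n \<le> \<theta>"
    and below_record: "\<theta> < \<Phi>"
    and record_ratio_incseq: "incseq (\<lambda>k. block_ratio (N k))"
    and record_ratio_lim: "(\<lambda>k. block_ratio (N k)) \<longlonglongrightarrow> \<Phi>"
begin

lemma N_pos: "0 < N k"
  using N0_pos strict_mono_less_eq[OF strict_mono_N, of 0 k] by linarith

lemma ratio_le_Phi: "1 \<le> n \<Longrightarrow> block_ratio n \<le> \<Phi>"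
  using off_record_ratio below_record incseq_le[OF record_ratio_incseq record_ratio_lim]
  by (cases "n \<in> range N") fastforce+

lemma phibar_interp3: "phibar (interp 3) = ereal \<Phi>"
  unfolding phibar_def
proof (rule antisym)
  show "Limsup at_top (\<lambda>q. ereal (interp 3 q / q)) \<le> ereal \<Phi>"
    using interp3_ratio_le[OF ratio_le_Phi]
    by (intro Limsup_bounded) (auto simp: eventually_at_top_linorder)
next
  define x where "x k = time (4 * N k)" for k
  have "filterlim x at_top sequentially"
  proof (rule filterlim_at_top_mono[OF time_at_top])
    have "k \<le> 4 * N k" for k using strict_mono_imp_increasing[OF strict_mono_N, of k] by simp
    then show "eventually (\<lambda>k. time k \<le> x k) sequentially"
      using strict_mono_less_eq[OF strict_mono_time] by (simp add: x_def)
  qed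
  have "ereal \<Phi> = Limsup sequentially (\<lambda>k. ereal (interp 3 (x k) / x k))"
    unfolding x_def interp3_ratio_block using record_ratio_lim
    by (intro lim_imp_Limsup[symmetric]) auto
  also have "\<dots> \<le> Limsup (filtermap x sequentially) (\<lambda>q. ereal (interp 3 q / q))"
    by (rule Limsup_filtermap_ge)
  also have "\<dots> \<le> Limsup at_top (\<lambda>q. ereal (interp 3 q / q))"
    using \<open>filterlim x at_top sequentially\<close> unfolding filterlim_def by (rule Limsup_mono_filter)
  finally show "ereal \<Phi> \<le> Limsup at_top (\<lambda>q. ereal (interp 3 q / q))" .
qed

lemma switch_pts_ratio_ge:
  assumes "\<theta> < \<alpha>"
  shows "{q \<in> switch_pts (time 0) (interp 3). \<alpha> \<le> interp 3 q / q}
    = {time (4 * N k) | k. \<alpha> \<le> block_ratio (N k)}"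
proof (intro set_eqI iffI)
  fix q assume "q \<in> {q \<in> switch_pts (time 0) (interp 3). \<alpha> \<le> interp 3 q / q}"
  then obtain n where q: "q = time (4 * n)" "1 \<le> n" "\<alpha> \<le> block_ratio n"
    unfolding switch_pts_interp3 by (auto simp: interp3_ratio_block simp del: mult_Suc_right)
  then have "n \<in> range N" using off_record_ratio assms by force
  then show "q \<in> {time (4 * N k) | k. \<alpha> \<le> block_ratio (N k)}" using q by auto
next
  fix q assume "q \<in> {time (4 * N k) | k. \<alpha> \<le> block_ratio (N k)}"
  then obtain k where k: "q = time (4 * N k)" "\<alpha> \<le> block_ratio (N k)" by auto
  obtain m where "N k = Suc m" using N_pos[of k] gr0_implies_Suc by blast
  then have "q \<in> switch_pts (time 0) (interp 3)" unfolding switch_pts_interp3 k by auto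
  then show "q \<in> {q \<in> switch_pts (time 0) (interp 3). \<alpha> \<le> interp 3 q / q}"
    using k interp3_ratio_block by simp
qed

lemma q_alpha_interp3:
  assumes "\<theta> < \<alpha>" "\<alpha> < \<Phi>"
  obtains K where "\<And>i. q_alpha (time 0) (interp 3) \<alpha> i = time (4 * N (K + i))"
proof -
  obtain K where K: "\<alpha> \<le> block_ratio (N K)"
    using order_tendstoD(1)[OF record_ratio_lim assms(2)]
    by (auto simp: eventually_sequentially intro: less_imp_le)
  define K0 where "K0 = (LEAST k. \<alpha> \<le> block_ratio (N k))"
  have "\<alpha> \<le> block_ratio (N k) \<longleftrightarrow> K0 \<le> k" for k
  proof
    assume "\<alpha> \<le> block_ratio (N k)" then show "K0 \<le> k" unfolding K0_def by (rule Least_le)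
  next
    assume "K0 \<le> k"
    moreover have "\<alpha> \<le> block_ratio (N K0)" unfolding K0_def using K by (rule LeastI)
    ultimately show "\<alpha> \<le> block_ratio (N k)"
      using record_ratio_incseq by (auto simp: incseq_def intro: order_trans)
  qed
  then have "{q \<in> switch_pts (time 0) (interp 3). \<alpha> \<le> interp 3 q / q} = {time (4 * N k) | k. K0 \<le> k}"
    unfolding switch_pts_ratio_ge[OF assms(1)] by simp
  moreover have "strict_mono (\<lambda>k. time (4 * N k))"
    using strict_mono_less[OF strict_mono_time] strict_mono_less[OF strict_mono_N]
    by (intro strict_monoI) simp
  ultimately show ?thesis
    using that[of K0] enum_real_strict_mono_tail unfolding q_alpha_def by simp
qed

lemma kappa_alpha_interp3:
  assumes "\<theta> < \<alpha>" "\<alpha> < \<Phi>"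
    and "(\<lambda>k. C (N k) / (A (N (Suc k)) + B (N (Suc k)) + C (N k))) \<longlonglongrightarrow> \<kappa>"
  shows "kappa_alpha (time 0) (interp 3) \<alpha> = ereal \<kappa>"
proof -
  obtain K where K: "\<And>i. q_alpha (time 0) (interp 3) \<alpha> i = time (4 * N (K + i))"
    using q_alpha_interp3[OF assms(1,2)] by blast
  have "interp 3 (q_alpha (time 0) (interp 3) \<alpha> i) / r_alpha (time 0) (interp 3) \<alpha> i
      = C (N (K + i)) / (A (N (Suc (K + i))) + B (N (Suc (K + i))) + C (N (K + i)))" for i
    unfolding r_alpha_def K interp3_time_block by (simp add: time_block)
  moreover have "(\<lambda>i. ereal (C (N (K + i)) / (A (N (Suc (K + i))) + B (N (Suc (K + i))) + C (N (K + i)))))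
      \<longlonglongrightarrow> ereal \<kappa>"
    using LIMSEQ_ignore_initial_segment[OF assms(3), of K] by (intro tendsto_ereal) (simp add: add.commute)
  ultimately show ?thesis
    unfolding kappa_alpha_def by (simp add: lim_imp_Liminf)
qed

theorem realizable_records:
  assumes "(\<lambda>k. C (N k) / (A (N (Suc k)) + B (N (Suc k)) + C (N k))) \<longlonglongrightarrow> \<kappa>"
  shows "realizable \<Phi> \<kappa>"
proof -
  have "has_kappa (time 0) (interp 3) (ereal \<kappa>)"
    unfolding has_kappa_def phibar_interp3 real_of_ereal.simps
    using eventually_at_left_real[OF below_record] kappa_alpha_interp3[OF _ _ assms]
    by (intro tendsto_eventually) (auto elim: eventually_mono)
  moreover have "strict_mono (\<lambda>n. time (4 * Suc n))"
    by (intro strict_monoI) (simp add: strict_mono_less[OF strict_mono_time])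
  then have "infinite (switch_pts (time 0) (interp 3))"
    unfolding switch_pts_interp3 by (intro range_inj_infinite strict_mono_imp_inj_on)
  moreover have "0 \<le> time 0" using time_block_pos[of 0] by simp
  ultimately show ?thesis
    unfolding realizable_def using three_system_interp interp1_at_top phibar_interp3 by blast
qed

end

section \<open>Geometric growth of the blocks\<close>

locale growth =
  fixes \<tau> g :: "nat \<Rightarrow> real"
  assumes \<tau>_pos: "0 < \<tau> n" and \<tau>_less_1: "\<tau> n < 1"
    and g_uniformly_gt_1: "\<exists>c>1. \<forall>n. c \<le> g n"
    and \<tau>_g: "1 < \<tau> (Suc n) * g n"
begin

definition C :: "nat \<Rightarrow> real" where
  "C n = (\<Prod>i<n. g i)"

text \<open>The initial values only have to satisfy 0 \<le> A 0 \<le> B 0 < A 1 = \<tau> 0.\<close>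

definition A :: "nat \<Rightarrow> real" where
  "A n = (case n of 0 \<Rightarrow> 0 | Suc m \<Rightarrow> \<tau> m * C m)"

definition B :: "nat \<Rightarrow> real" where
  "B n = (case n of 0 \<Rightarrow> \<tau> 0 / 2 | Suc m \<Rightarrow> C m)"

lemma g_gt_1: "1 < g n"
  using g_uniformly_gt_1 by (meson less_le_trans)

lemma C_Suc: "C (Suc n) = g n * C n"
  by (simp add: C_def)

lemma C_pos: "0 < C n"
  unfolding C_def using g_gt_1 by (intro prod_pos) (auto intro: less_trans[OF zero_less_one])

lemma C_shift: "C (n + d) = (\<Prod>i\<in>{n..<n + d}. g i) * C n"
  by (induction d) (simp_all add: C_Suc)

lemma C_at_top: "filterlim C at_top sequentially"
proof -
  obtain c where c: "1 < c" "\<And>n. c \<le> g n" using g_uniformly_gt_1 by blast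
  have "c ^ n \<le> C n" for n
    using c prod_mono[of "{..<n}" "\<lambda>_. c" g] unfolding C_def by simp
  moreover have "filterlim (\<lambda>n. c ^ n) at_top sequentially" using c(1) by (rule realpow_at_top)
  ultimately show ?thesis by (auto intro: filterlim_at_top_mono)
qed

sublocale blocks A B C
proof
  fix n
  show "B n < A (Suc n)"
  proof (cases n)
    case (Suc m)
    then show ?thesis
      using \<tau>_g[of m] C_pos[of m] by (simp add: A_def B_def C_Suc mult.assoc[symmetric])
  qed (simp add: A_def B_def C_def \<tau>_pos)
  show "A (Suc n) < C n" using \<tau>_less_1[of n] C_pos[of n] by (simp add: A_def)
  show "C n < C (Suc n)" using g_gt_1[of n] C_pos[of n] by (simp add: C_Suc)
qed (use \<tau>_pos[of 0] C_at_top in \<open>simp_all add: A_def B_def\<close>)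

lemma block_ratio_Suc: "block_ratio (Suc n) = g n / (1 + \<tau> n + g n)"
proof -
  have "block_ratio (Suc n) = (g n * C n) / ((1 + \<tau> n + g n) * C n)"
    by (simp add: block_ratio_def A_def B_def C_Suc algebra_simps)
  then show ?thesis using C_pos[of n] by simp
qed

lemma record_quotient:
  assumes "n \<le> m"
  shows "C n / (A (Suc m) + B (Suc m) + C n) = 1 / (1 + (1 + \<tau> m) * (\<Prod>i\<in>{n..<m}. g i))"
proof -
  have "C m = (\<Prod>i\<in>{n..<m}. g i) * C n"
    using C_shift[of n "m - n"] assms by simp
  then have "A (Suc m) + B (Suc m) + C n = (1 + (1 + \<tau> m) * (\<Prod>i\<in>{n..<m}. g i)) * C n"
    by (simp add: A_def B_def algebra_simps)
  then show ?thesis using C_pos[of n] by simp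
qed

text \<open>The record blocks are the blocks Suc (M k), whose growth factors are g (M k).\<close>

theorem realizable_growth:
  fixes M :: "nat \<Rightarrow> nat"
  assumes M: "strict_mono M"
    and off_record: "\<And>n. n \<notin> range M \<Longrightarrow> g n / (1 + \<tau> n + g n) \<le> \<theta>" and "\<theta> < \<Phi>"
    and "incseq (\<lambda>k. g (M k) / (1 + \<tau> (M k) + g (M k)))"
    and "(\<lambda>k. g (M k) / (1 + \<tau> (M k) + g (M k))) \<longlonglongrightarrow> \<Phi>"
    and "(\<lambda>k. 1 / (1 + (1 + \<tau> (M (Suc k))) * (\<Prod>i\<in>{Suc (M k)..<M (Suc k)}. g i))) \<longlonglongrightarrow> \<kappa>"
  shows "realizable \<Phi> \<kappa>"
proof -
  interpret block_records A B C "\<lambda>k. Suc (M k)" \<theta> \<Phi>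
  proof
    show "strict_mono (\<lambda>k. Suc (M k))" using M by (simp add: strict_mono_def)
    show "block_ratio n \<le> \<theta>" if "1 \<le> n" "n \<notin> range (\<lambda>k. Suc (M k))" for n
      using that off_record[of "n - 1"] block_ratio_Suc[of "n - 1"] by (cases n) auto
  qed (use assms in \<open>simp_all add: block_ratio_Suc\<close>)
  have "Suc (M k) \<le> M (Suc k)" for k
    using strict_monoD[OF M, of k "Suc k"] by simp
  then show ?thesis
    using assms(6) by (intro realizable_records) (simp add: record_quotient)
qed

end

theorem realizable_every_block:
  fixes \<tau> lv :: "nat \<Rightarrow> real"
  assumes \<tau>: "\<And>n. 0 < \<tau> n" "\<And>n. \<tau> n < 1" "\<tau> \<longlonglongrightarrow> t"
    and c: "1 < c" "\<And>n. c \<le> lv n * (1 + \<tau> n)"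
    and \<tau>_lv: "\<And>n. 1 < \<tau> (Suc n) * lv n * (1 + \<tau> n)"
    and "incseq (\<lambda>n. lv n / (1 + lv n))" "(\<lambda>n. lv n / (1 + lv n)) \<longlonglongrightarrow> \<Phi>" "0 < \<Phi>"
  shows "realizable \<Phi> (1 / (2 + t))"
proof -
  interpret growth \<tau> "\<lambda>n. lv n * (1 + \<tau> n)"
    using \<tau> c \<tau>_lv by unfold_locales (auto simp: mult.assoc)
  have ratio: "lv n * (1 + \<tau> n) / (1 + \<tau> n + lv n * (1 + \<tau> n)) = lv n / (1 + lv n)" for n
    using div_one_plus_scaled \<tau>(1)[of n] by (simp add: add_pos_pos)
  have "(\<lambda>k. 1 / (2 + \<tau> (Suc k))) \<longlonglongrightarrow> 1 / (2 + t)"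
    using \<tau>(3) LIMSEQ_le_const[OF \<tau>(3), of 0] \<tau>(1)
    by (intro tendsto_intros LIMSEQ_Suc) (auto simp: less_imp_le)
  then show ?thesis
    using assms(7-9) by (intro realizable_growth[where M = id and \<theta> = 0]) (simp_all add: ratio strict_mono_def)
qed

section \<open>Choice of the parameters\<close>

lemma exists_tau:
  fixes L c :: real
  assumes "1/2 < L" "c < 1"
  obtains \<tau> where "0 < \<tau>" "\<tau> < 1" "c < \<tau>" "1 < L * \<tau>^2 * (1 + \<tau>)"
proof -
  define b where "b = (4 * L + 1) / (6 * L)"
  have b: "0 < b" "b < 1" "6 * L * b = 4 * L + 1" using assms(1) by (simp_all add: b_def divide_simps)
  define \<tau> where "\<tau> = (1 + max c b) / 2"
  have \<tau>: "c < \<tau>" "b < \<tau>" "\<tau> < 1" using assms(2) b(2) by (auto simp: \<tau>_def max_def)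
  moreover have "0 < \<tau>" using \<tau>(2) b(1) by linarith
  moreover have "1 < L * \<tau>^2 * (1 + \<tau>)"
  proof -
    have "6 * L * b < 6 * L * \<tau>" using \<tau>(2) assms(1) by simp
    then have "1 < 2 * L * (3 * \<tau> - 2)" using b(3) by (simp add: algebra_simps)
    also have "3 * \<tau> - 2 \<le> \<tau>^3"
    proof -
      have "0 \<le> (\<tau> - 1)^2 * (\<tau> + 2)" using \<open>0 < \<tau>\<close> by simp
      also have "\<dots> = \<tau>^3 - (3 * \<tau> - 2)" by (simp add: power2_eq_square power3_eq_cube algebra_simps)
      finally show ?thesis by simp
    qed
    then have "2 * L * (3 * \<tau> - 2) \<le> 2 * L * \<tau>^3" using assms(1) by simp
    also have "\<dots> \<le> L * \<tau>^2 * (1 + \<tau>)"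
      using \<tau>(3) \<open>0 < \<tau>\<close> assms(1) by (simp add: power2_eq_square power3_eq_cube algebra_simps)
    finally show ?thesis .
  qed
  ultimately show ?thesis using that by blast
qed

lemma exists_root_between:
  fixes a H Y :: real
  assumes "1 < a" "a^2 < H" "a < Y"
  obtains j \<gamma> where "0 < j" "\<gamma> ^ j = Y" "a < \<gamma>" "\<gamma> < H"
proof -
  have "1 < H" using assms(1,2) one_less_power[of a 2] by linarith
  define j where "j = (LEAST j. Y < H ^ j)"
  have Y_less: "Y < H ^ j" unfolding j_def using real_arch_pow[OF \<open>1 < H\<close>] by (rule LeastI_ex)
  have "j \<noteq> 0" using Y_less assms by (intro notI) simp
  have "a ^ j < Y"
  proof (cases "j = 1")
    case False
    then have "2 \<le> j" using \<open>j \<noteq> 0\<close> by simp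
    have "H ^ (j - 1) \<le> Y"
      using not_less_Least[of "j - 1" "\<lambda>j. Y < H ^ j"] \<open>j \<noteq> 0\<close> by (simp add: j_def)
    have "a ^ j \<le> a ^ (2 * (j - 1))" using assms(1) \<open>2 \<le> j\<close> by (intro power_increasing) auto
    also have "\<dots> = (a ^ 2) ^ (j - 1)" by (simp add: power_mult)
    also have "\<dots> < H ^ (j - 1)" using assms \<open>2 \<le> j\<close> by (intro power_strict_mono) auto
    finally show ?thesis using \<open>H ^ (j - 1) \<le> Y\<close> by linarith
  qed (use assms in simp)
  define \<gamma> where "\<gamma> = root j Y"
  have "\<gamma> ^ j = Y" "0 \<le> \<gamma>" using \<open>j \<noteq> 0\<close> assms by (simp_all add: \<gamma>_def)
  then have "a < \<gamma>" "\<gamma> < H"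
    using \<open>a ^ j < Y\<close> Y_less assms(1) \<open>1 < H\<close>
    by (auto intro: power_less_imp_less_base)
  then show ?thesis using that \<open>j \<noteq> 0\<close> \<open>\<gamma> ^ j = Y\<close> by blast
qed

locale ratio_profile =
  fixes lv :: "nat \<Rightarrow> real" and L \<Phi> :: real
  assumes L_gt_half: "1/2 < L" and L_le_lv: "L \<le> lv n" and incseq_lv: "incseq lv"
    and lv_ratio_lim: "(\<lambda>n. lv n / (1 + lv n)) \<longlonglongrightarrow> \<Phi>"
begin

lemma lv_pos: "0 < lv n"
  using L_gt_half L_le_lv[of n] by linarith

lemma lv_ratio_incseq: "incseq (\<lambda>n. lv n / (1 + lv n))"
proof (rule incseq_SucI)
  show "lv n / (1 + lv n) \<le> lv (Suc n) / (1 + lv (Suc n))" for n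
    using incseq_lv lv_pos[of n] by (intro div_one_plus_mono) (auto simp: incseq_Suc_iff less_imp_le)
qed

lemma L_ratio_le_Phi: "L / (1 + L) \<le> \<Phi>"
proof (rule LIMSEQ_le_const[OF lv_ratio_lim])
  have "L / (1 + L) \<le> lv n / (1 + lv n)" for n
    using L_gt_half L_le_lv[of n] by (intro div_one_plus_mono) auto
  then show "\<exists>N. \<forall>n\<ge>N. L / (1 + L) \<le> lv n / (1 + lv n)" by blast
qed

lemma realizable_every_block_profile:
  fixes \<tau> :: "nat \<Rightarrow> real"
  assumes "0 < m" "\<And>n. m \<le> \<tau> n" "\<And>n. \<tau> n < 1" "\<tau> \<longlonglongrightarrow> t" "1 < L * (1 + m)"
    and \<tau>_L: "\<And>n. 1 < \<tau> (Suc n) * L * (1 + \<tau> n)"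
  shows "realizable \<Phi> (1 / (2 + t))"
proof (rule realizable_every_block[where c = "L * (1 + m)"])
  show "0 < \<tau> n" "\<tau> n < 1" for n using assms(1) assms(2,3)[of n] by linarith+
  show "L * (1 + m) \<le> lv n * (1 + \<tau> n)" for n
    using L_le_lv[of n] assms(1) assms(2)[of n] L_gt_half by (intro mult_mono) auto
  show "1 < \<tau> (Suc n) * lv n * (1 + \<tau> n)" for n
  proof -
    have "\<tau> (Suc n) * L * (1 + \<tau> n) \<le> \<tau> (Suc n) * lv n * (1 + \<tau> n)"
      using L_le_lv[of n] assms(1) assms(2)[of n] assms(2)[of "Suc n"]
      by (intro mult_right_mono mult_left_mono) auto
    then show ?thesis using \<tau>_L[of n] by linarith
  qed
  have "0 < L / (1 + L)" using L_gt_half by simp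
  then show "0 < \<Phi>" using L_ratio_le_Phi by linarith
qed (use assms lv_ratio_incseq lv_ratio_lim in auto)

lemma realizable_sparse:
  fixes \<tau> \<gamma> :: real and M :: "nat \<Rightarrow> nat"
  assumes \<tau>: "0 < \<tau>" "\<tau> < 1" and \<gamma>: "1 < \<tau> * \<gamma>" "\<gamma> < L * (1 + \<tau>)" and \<tau>_L: "1 < \<tau> * L * (1 + \<tau>)"
    and M: "strict_mono M"
    and \<kappa>: "(\<lambda>k. 1 / (1 + (1 + \<tau>) * \<gamma> ^ (M (Suc k) - Suc (M k)))) \<longlonglongrightarrow> \<kappa>"
  shows "realizable \<Phi> \<kappa>"
proof -
  define g where "g n = (if n \<in> range M then lv n * (1 + \<tau>) else \<gamma>)" for n
  have lv_g: "L * (1 + \<tau>) \<le> lv n * (1 + \<tau>)" for n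
    using L_le_lv \<tau> by (simp add: mult_right_mono)
  interpret growth "\<lambda>_. \<tau>" g
  proof
    have "1 < \<gamma>" "1 < L * (1 + \<tau>)"
      using one_less_of_one_less_mult[OF _ _ \<gamma>(1)] one_less_of_one_less_mult[of \<tau> "L * (1 + \<tau>)"] \<tau>_L \<tau>
      by (simp_all add: mult.assoc)
    then show "\<exists>c>1. \<forall>n. c \<le> g n"
      using lv_g by (intro exI[of _ "min \<gamma> (L * (1 + \<tau>))"]) (auto simp: g_def min.coboundedI2)
    show "1 < \<tau> * g n" for n
      using \<gamma>(1) \<tau>_L mult_left_mono[OF lv_g \<tau>(1)[THEN less_imp_le], of n]
      by (auto simp: g_def mult.assoc)
  qed (use \<tau> in auto)
  show ?thesis
  proof (rule realizable_growth[OF M, where \<theta> = "\<gamma> / (1 + \<tau> + \<gamma>)"])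
    show "g n / (1 + \<tau> + g n) \<le> \<gamma> / (1 + \<tau> + \<gamma>)" if "n \<notin> range M" for n
      using that by (simp add: g_def)
    have "\<gamma> / (1 + \<tau> + \<gamma>) < L / (1 + L)"
      using \<gamma>(2) \<tau> L_gt_half one_less_of_one_less_mult[OF _ _ \<gamma>(1)] by (simp add: divide_simps algebra_simps)
    then show "\<gamma> / (1 + \<tau> + \<gamma>) < \<Phi>" using L_ratio_le_Phi by linarith
    have record_ratio: "g (M k) / (1 + \<tau> + g (M k)) = lv (M k) / (1 + lv (M k))" for k
      using div_one_plus_scaled[of \<tau> "lv (M k)"] \<tau> by (simp add: g_def)
    show "incseq (\<lambda>k. g (M k) / (1 + \<tau> + g (M k)))"
      unfolding record_ratio using lv_ratio_incseq strict_mono_less_eq[OF M]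
      by (simp add: incseq_def)
    show "(\<lambda>k. g (M k) / (1 + \<tau> + g (M k))) \<longlonglongrightarrow> \<Phi>"
      unfolding record_ratio using LIMSEQ_subseq_LIMSEQ[OF lv_ratio_lim M] by (simp add: comp_def)
    have "(\<Prod>i\<in>{Suc (M k)..<M (Suc k)}. g i) = \<gamma> ^ (M (Suc k) - Suc (M k))" for k
      using prod_between_strict_mono[OF M] by (simp add: g_def)
    then show "(\<lambda>k. 1 / (1 + (1 + \<tau>) * (\<Prod>i\<in>{Suc (M k)..<M (Suc k)}. g i))) \<longlonglongrightarrow> \<kappa>"
      using \<kappa> by simp
  qed
qed

end

context ratio_profile
begin

lemma realizable_above_half:
  assumes lh: "1/2 < lh" "lh < 1" and "lh^2 \<le> L * (1 - lh)"
  shows "realizable \<Phi> (lh / (1 + lh))"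
proof -
  define t where "t = (1 - lh) / lh"
  have t: "0 < t" "t < 1" using lh by (auto simp: t_def field_simps)
  have "L * t * (1 + t) = L * (1 - lh) / lh^2"
    using lh by (simp add: t_def field_simps power2_eq_square)
  then have Lt: "1 \<le> L * t * (1 + t)" using assms(3) lh by simp
  then have Lt': "1 \<le> t * (L * (1 + t))" by (simp add: ac_simps)
  define \<tau> where "\<tau> n = t + (1 - t) / real (n + 2)" for n
  have \<tau>: "t < \<tau> n" "\<tau> n < 1" for n
    using const_over_n_bounds[of "1 - t" n] t by (auto simp: \<tau>_def)
  have "realizable \<Phi> (1 / (2 + t))"
  proof (rule realizable_every_block_profile[of t \<tau>])
    show "\<tau> \<longlonglongrightarrow> t" unfolding \<tau>_def by (rule tendsto_plus_const_over_n)
    have "L * t * (1 + t) < L * 1 * (1 + t)"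
      using t L_gt_half by (intro mult_strict_right_mono mult_strict_left_mono) auto
    then show "1 < L * (1 + t)" using Lt by simp
    show "1 < \<tau> (Suc n) * L * (1 + \<tau> n)" for n
    proof -
      have "L * (1 + t) < L * (1 + \<tau> n)" using \<tau>(1)[of n] L_gt_half by simp
      then have "t * (L * (1 + t)) < \<tau> (Suc n) * (L * (1 + \<tau> n))"
        by (rule mult_strict_mono[OF \<tau>(1)[of "Suc n"]]) (use t L_gt_half \<tau>(1)[of "Suc n"] in auto)
      then show ?thesis using Lt' by (simp add: mult.assoc)
    qed
  qed (use t \<tau> in \<open>auto intro: less_imp_le\<close>)
  moreover have "1 / (2 + t) = lh / (1 + lh)" using lh by (simp add: t_def field_simps)
  ultimately show ?thesis by simp
qed

text \<open>For lh = 1/2 the limit (1 - lh) / lh = 1 of \<tau> has to be approached from below.\<close>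

lemma realizable_half: "realizable \<Phi> ((1/2) / (1 + 1/2))"
proof -
  define \<delta> where "\<delta> = (2 * L - 1) / (4 * L)"
  have \<delta>: "0 < \<delta>" "\<delta> < 1/2" "L * (2 - 3 * \<delta>) = (2 * L + 3) / 4"
    using L_gt_half by (simp_all add: \<delta>_def field_simps)
  have "1 < (1 - \<delta>) * L * (2 - \<delta>)"
  proof -
    have "1 < L * (2 - 3 * \<delta>)" using \<delta>(3) L_gt_half by simp
    also have "\<dots> \<le> L * (2 - 3 * \<delta>) + L * \<delta>^2" using L_gt_half by simp
    also have "\<dots> = (1 - \<delta>) * L * (2 - \<delta>)" by (simp add: power2_eq_square algebra_simps)
    finally show ?thesis .
  qed
  define \<tau> where "\<tau> n = 1 + (- \<delta>) / real (n + 2)" for n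
  have \<tau>: "1 - \<delta> \<le> \<tau> n" "\<tau> n < 1" for n
    using const_over_n_bounds[of \<delta> n] \<delta> by (auto simp: \<tau>_def)
  have "realizable \<Phi> (1 / (2 + 1))"
  proof (rule realizable_every_block_profile[of "1 - \<delta>" \<tau>])
    show "\<tau> \<longlonglongrightarrow> 1" unfolding \<tau>_def by (rule tendsto_plus_const_over_n)
    have "1 < L * (2 - 3 * \<delta>)" using \<delta>(3) L_gt_half by simp
    also have "\<dots> \<le> L * (1 + (1 - \<delta>))" using \<delta>(1) L_gt_half by (intro mult_left_mono) auto
    finally show "1 < L * (1 + (1 - \<delta>))" .
    show "1 < \<tau> (Suc n) * L * (1 + \<tau> n)" for n
    proof -
      have "(1 - \<delta>) * L * (2 - \<delta>) \<le> \<tau> (Suc n) * L * (1 + \<tau> n)"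
        using \<tau>[of n] \<tau>[of "Suc n"] \<delta> L_gt_half by (intro mult_mono) auto
      then show ?thesis using \<open>1 < (1 - \<delta>) * L * (2 - \<delta>)\<close> by linarith
    qed
  qed (use \<delta>(2) \<tau> in auto)
  then show ?thesis by simp
qed

lemma realizable_from_half:
  assumes "1/2 \<le> lh" "lh < 1" "lh^2 \<le> L * (1 - lh)"
  shows "realizable \<Phi> (lh / (1 + lh))"
proof (cases "lh = 1/2")
  case True
  show ?thesis unfolding True by (rule realizable_half)
qed (use assms realizable_above_half in auto)

lemma realizable_below_half_pos:
  assumes lh: "0 < lh" "lh < 1/2"
  shows "realizable \<Phi> (lh / (1 + lh))"
proof -
  define X where "X = 1 / lh"
  have X: "2 < X" "1 / (X - 1) < 1" using lh by (simp_all add: X_def field_simps)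
  obtain \<tau> where \<tau>: "0 < \<tau>" "\<tau> < 1" "1 / (X - 1) < \<tau>" "1 < L * \<tau>^2 * (1 + \<tau>)"
    using exists_tau[OF L_gt_half X(2)] by blast
  define Y where "Y = X / (1 + \<tau>)"
  have "1 < \<tau> * (X - 1)" using \<tau>(3) X by (simp add: divide_simps mult.commute)
  then have "1 / \<tau> < Y" using \<tau>(1) by (simp add: Y_def divide_simps algebra_simps)
  moreover have "(1 / \<tau>)^2 < L * (1 + \<tau>)"
    using \<tau>(1,4) by (simp add: divide_simps power2_eq_square algebra_simps)
  moreover have "1 < 1 / \<tau>" using \<tau>(1,2) by simp
  ultimately obtain j \<gamma> where j: "0 < j" "\<gamma> ^ j = Y" "1 / \<tau> < \<gamma>" "\<gamma> < L * (1 + \<tau>)"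
    using exists_root_between by blast
  have gap: "Suc j * Suc k - Suc (Suc j * k) = j" for k by simp
  have "(1 + \<tau>) * Y = X" using \<tau>(1) by (simp add: Y_def)
  then have "1 / (1 + (1 + \<tau>) * Y) = 1 / (1 + X)" by simp
  also have "\<dots> = lh / (1 + lh)" using lh by (simp add: X_def field_simps)
  finally have kappa: "1 / (1 + (1 + \<tau>) * Y) = lh / (1 + lh)" .
  show ?thesis
  proof (rule realizable_sparse[of \<tau> \<gamma> "\<lambda>k. Suc j * k"])
    show "1 < \<tau> * \<gamma>" using j(3) \<tau>(1) by (simp add: divide_simps mult.commute)
    show "1 < \<tau> * L * (1 + \<tau>)"
      using one_less_of_one_less_mult[of \<tau> "\<tau> * L * (1 + \<tau>)"] \<tau>
      by (simp add: power2_eq_square mult.assoc mult.left_commute)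
    show "strict_mono (\<lambda>k. Suc j * k)" by (intro strict_monoI mult_strict_left_mono) simp_all
    show "(\<lambda>k. 1 / (1 + (1 + \<tau>) * \<gamma> ^ (Suc j * Suc k - Suc (Suc j * k)))) \<longlonglongrightarrow> lh / (1 + lh)"
      unfolding gap j(2) kappa by simp
  qed (use \<tau> j(4) in simp_all)
qed

lemma realizable_kappa_zero: "realizable \<Phi> 0"
proof -
  obtain \<tau> where \<tau>: "0 < \<tau>" "\<tau> < 1" "1 < L * \<tau>^2 * (1 + \<tau>)"
    using exists_tau[OF L_gt_half, of 0] by auto
  have \<tau>_L: "1 < \<tau> * L * (1 + \<tau>)"
    using one_less_of_one_less_mult[of \<tau> "\<tau> * L * (1 + \<tau>)"] \<tau>
    by (simp add: power2_eq_square mult.assoc mult.left_commute)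
  then have "1 / \<tau> < L * (1 + \<tau>)" using \<tau>(1) by (simp add: pos_divide_less_eq ac_simps)
  define \<gamma> where "\<gamma> = (1 / \<tau> + L * (1 + \<tau>)) / 2"
  have \<gamma>: "1 / \<tau> < \<gamma>" "\<gamma> < L * (1 + \<tau>)" using \<open>1 / \<tau> < L * (1 + \<tau>)\<close> by (simp_all add: \<gamma>_def)
  have "1 < \<tau> * \<gamma>" using \<gamma>(1) \<tau>(1) by (simp add: divide_simps mult.commute)
  show ?thesis
  proof (rule realizable_sparse[of \<tau> \<gamma> "\<lambda>k. k * k"])
    show "strict_mono (\<lambda>k::nat. k * k)" by (rule strict_monoI) (simp add: mult_strict_mono)
    have "filterlim (\<lambda>k. Suc k * Suc k - Suc (k * k)) at_top sequentially"
      by (rule filterlim_at_top_mono[OF filterlim_ident]) auto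
    moreover have "1 < \<gamma>" using one_less_of_one_less_mult[OF _ _ \<open>1 < \<tau> * \<gamma>\<close>] \<tau> by simp
    ultimately show "(\<lambda>k. 1 / (1 + (1 + \<tau>) * \<gamma> ^ (Suc k * Suc k - Suc (k * k)))) \<longlonglongrightarrow> 0"
      using \<tau>(1) by (intro inverse_geometric_gap_tendsto_0) auto
  qed (use \<tau> \<gamma>(2) \<tau>_L \<open>1 < \<tau> * \<gamma>\<close> in auto)
qed

lemma realizable_below_half:
  assumes "0 \<le> lh" "lh < 1/2"
  shows "realizable \<Phi> (lh / (1 + lh))"
proof (cases "lh = 0")
  case True
  then show ?thesis using realizable_kappa_zero by simp
qed (use assms realizable_below_half_pos in auto)

end

text \<open>For l = \<infinity> the record parameters lv n may grow, which allows \<tau> n \<rightarrow> 0, that is lh = 1.\<close>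

lemma realizable_one_from_half:
  assumes lh: "1/2 \<le> lh" "lh \<le> 1"
  shows "realizable 1 (lh / (1 + lh))"
proof -
  define t where "t = (1 - lh) / lh"
  have t: "0 \<le> t" "t \<le> 1" using lh by (auto simp: t_def field_simps)
  define \<tau> where "\<tau> n = t + (1/2 - t) / real (n + 2)" for n
  have \<tau>: "1 / (2 * real (n + 2)) \<le> \<tau> n" "\<tau> n < 1" for n
  proof -
    define a where "a = (real n + 1) * t"
    have e: "\<tau> n = (2 * a + 1) / (2 * real (n + 2))" by (simp add: \<tau>_def a_def field_simps)
    have "0 \<le> a" "a \<le> real n + 1" using t by (simp_all add: a_def mult_left_le)
    then show "1 / (2 * real (n + 2)) \<le> \<tau> n" "\<tau> n < 1"
      unfolding e by (simp_all add: divide_right_mono divide_less_eq)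
  qed
  define lv where "lv n = 4 * (real n + 2)" for n
  have "realizable 1 (1 / (2 + t))"
  proof (rule realizable_every_block[where c = 8])
    have "0 < 1 / (2 * real (n + 2))" for n by simp
    then show \<tau>_pos: "0 < \<tau> n" for n using \<tau>(1) by (rule less_le_trans)
    show "\<tau> \<longlonglongrightarrow> t" unfolding \<tau>_def by (rule tendsto_plus_const_over_n)
    show "8 \<le> lv n * (1 + \<tau> n)" for n
      using mult_mono[of 8 "lv n" 1 "1 + \<tau> n"] \<tau>_pos[of n] by (simp add: lv_def)
    show "1 < \<tau> (Suc n) * lv n * (1 + \<tau> n)" for n
    proof -
      have "1 < 1 / (2 * real (Suc n + 2)) * lv n" by (simp add: lv_def field_simps)
      also have "\<dots> \<le> \<tau> (Suc n) * lv n" by (rule mult_right_mono[OF \<tau>(1)]) (simp add: lv_def)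
      also have "\<dots> \<le> \<tau> (Suc n) * lv n * (1 + \<tau> n)"
        using \<tau>_pos[of n] \<tau>_pos[of "Suc n"] by (simp add: lv_def)
      finally show ?thesis .
    qed
    show "incseq (\<lambda>n. lv n / (1 + lv n))"
      by (intro incseq_SucI div_one_plus_mono) (simp_all add: lv_def)
    show "(\<lambda>n. lv n / (1 + lv n)) \<longlonglongrightarrow> 1"
      by (rule div_one_plus_tendsto_1, rule filterlim_at_top_mono[OF filterlim_real_sequentially])
         (simp add: lv_def)
  qed (use \<tau> in simp_all)
  moreover have "1 / (2 + t) = lh / (1 + lh)" using lh by (simp add: t_def field_simps)
  ultimately show ?thesis by simp
qed

theorem mainTheorem10:
  fixes lh :: real and l :: ereal
  assumes "0 \<le> lh" "lh \<le> 1" "ereal (1/2) < l"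
    and "(lh < 1 \<and> ereal (lh^2 / (1 - lh)) \<le> l) \<or> (lh = 1 \<and> l = \<infinity>)"
  shows "\<exists>q0 P1 P2 P3. q0 \<ge> 0 \<and> three_system q0 P1 P2 P3 \<and>
           filterlim P1 at_top at_top \<and>
           infinite (switch_pts q0 P3) \<and>
           phibar P3 = (if l = \<infinity> then 1 else ereal (real_of_ereal l / (1 + real_of_ereal l))) \<and>
           has_kappa q0 P3 (ereal (lh / (1 + lh)))"
proof (cases l)
  case (real L)
  have L: "1/2 < L" "lh < 1" "lh^2 \<le> L * (1 - lh)"
    using assms(3,4) real by (auto simp: pos_divide_le_eq)
  interpret ratio_profile "\<lambda>_. L" L "L / (1 + L)"
    using L(1) by unfold_locales (auto simp: incseq_def)
  have "realizable (L / (1 + L)) (lh / (1 + lh))"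
    using assms(1) L(2,3) realizable_below_half realizable_from_half by (cases "lh < 1/2") auto
  then show ?thesis using real unfolding realizable_def by simp
next
  case PInf
  have "realizable 1 (lh / (1 + lh))"
  proof (cases "lh < 1/2")
    case True
    interpret ratio_profile "\<lambda>n. real n + 1" 1 1
    proof
      show "(\<lambda>n. (real n + 1) / (1 + (real n + 1))) \<longlonglongrightarrow> 1"
        by (intro div_one_plus_tendsto_1 filterlim_at_top_mono[OF filterlim_real_sequentially]) auto
    qed (auto simp: incseq_def)
    show ?thesis using realizable_below_half assms(1) True by simp
  qed (use assms(2) realizable_one_from_half in simp)
  then show ?thesis using PInf unfolding realizable_def by (simp add: one_ereal_def)
next
  case MInf
  then show ?thesis using assms(3) by simp
qed

end
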